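(* Let $G,H\in\mathcal{C}_{n,m}$ and suppose $W_G(x,y)-W_H(x,y)=(1-xy)P(x,y)$ for some nonnegative polynomial $P$. Then $N_i^{(k)}(H)\le N_i^{(k)}(G)$ for every $i\in\{0,1,\ldots,m\}$ and every $k\in\{1,2,\ldots,n\}$.
   Context: $\mathcal{C}_{n,m}$ denotes the set of all connected simple graphs on $n$ vertices and $m$ edges. For a graph $G$ with vertex set $V$, $\kappa(G)$ is its number of connected components, $r(G)=|V|-\kappa(G)$, $c(G)=|E(G)|-|V|+\kappa(G)$. $\mathcal{S}(G)$ is the set of all spanning subgraphs of $G$. The Whitney polynomial is $W_G(x,y)=\sum_{H\in\mathcal{S}(G)}x^{r(G)-r(H)}y^{c(H)}$. A bivariate polynomial is nonnegative if all its coefficients (in the monomial basis $x^iy^j$) are nonnegative real numbers. For $i\in\{0,\ldots,m\}$ and $k\in\{1,\ldots,n\}$, $N_i^{(k)}(G)$ is the number of spanning subgraphs of $G$ having exactly $i$ edges and at most $k$ connected components. *)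

theory Defs
  imports "HOL-Computational_Algebra.Polynomial"
begin

definition simple_graph :: "'a set \<Rightarrow> 'a set set \<Rightarrow> bool" where
  "simple_graph V E \<longleftrightarrow> finite V \<and> (\<forall>e\<in>E. e \<subseteq> V \<and> card e = 2)"

definition adj :: "'a set set \<Rightarrow> ('a \<times> 'a) set" where
  "adj F = {(u, v). {u, v} \<in> F}"

definition conn_rel :: "'a set \<Rightarrow> 'a set set \<Rightarrow> ('a \<times> 'a) set" where
  "conn_rel V F = {(u, v). u \<in> V \<and> v \<in> V \<and> (u, v) \<in> (adj F)\<^sup>*}"

definition kappa :: "'a set \<Rightarrow> 'a set set \<Rightarrow> nat" where
  "kappa V F = card (V // conn_rel V F)"

definition connected_graph :: "'a set \<Rightarrow> 'a set set \<Rightarrow> bool" where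
  "connected_graph V E \<longleftrightarrow> kappa V E = 1"

definition in_C :: "nat \<Rightarrow> nat \<Rightarrow> 'a set \<Rightarrow> 'a set set \<Rightarrow> bool" where
  "in_C n m V E \<longleftrightarrow> simple_graph V E \<and> connected_graph V E \<and> card V = n \<and> card E = m"

definition rk :: "'a set \<Rightarrow> 'a set set \<Rightarrow> nat" where
  "rk V F = card V - kappa V F"

definition nullity :: "'a set \<Rightarrow> 'a set set \<Rightarrow> nat" where
  "nullity V F = card F + kappa V F - card V"

text \<open>Bivariate real polynomials are represented as real poly poly:
  the outer variable is x, the inner variable is y, so the monomial
  x^a y^b is monom (monom 1 b) a.\<close>
definition mono_xy :: "nat \<Rightarrow> nat \<Rightarrow> real poly poly" where
  "mono_xy a b = monom (monom 1 b) a"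

definition whitney :: "'a set \<Rightarrow> 'a set set \<Rightarrow> real poly poly" where
  "whitney V E = (\<Sum>F\<in>Pow E. mono_xy (rk V E - rk V F) (nullity V F))"

definition nonneg_poly2 :: "real poly poly \<Rightarrow> bool" where
  "nonneg_poly2 P \<longleftrightarrow> (\<forall>a b. coeff (coeff P a) b \<ge> 0)"

definition N_count :: "'a set \<Rightarrow> 'a set set \<Rightarrow> nat \<Rightarrow> nat \<Rightarrow> nat" where
  "N_count V E i k = card {F. F \<subseteq> E \<and> card F = i \<and> kappa V F \<le> k}"

end

theory Submission
  imports Defs
begin

text \<open>For a connected graph on \<open>n\<close> vertices, a spanning subgraph with
  \<open>i\<close> edges and \<open>q\<close> components contributes the monomial \<open>x^(q-1) y^(i+q-n)\<close>
  to the Whitney polynomial (the exponent of \<open>y\<close> is nonnegative because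
  \<open>n \<le> i + q\<close>). Hence \<open>N\<^sub>i\<^sup>(\<^sup>k\<^sup>)\<close> is the sum of the coefficients of
  \<open>x^a y^(a+t)\<close> for \<open>a < k\<close>, on the diagonal \<open>t = i + 1 - n\<close>. Multiplication
  by \<open>1 - xy\<close> acts on each diagonal as a difference operator, so this partial
  diagonal sum of \<open>W\<^sub>G - W\<^sub>H = (1 - xy) P\<close> telescopes to the single coefficient
  of \<open>x^(k-1) y^(k-1+t)\<close> in \<open>P\<close>, which is nonnegative.\<close>

lemma sym_rtrancl_adj: "sym ((adj F)\<^sup>*)"
  by (rule sym_rtrancl) (auto simp: adj_def sym_def insert_commute)

lemma quotient_conn_rel: "V // conn_rel V F = (\<lambda>x. conn_rel V F `` {x}) ` V"
  unfolding quotient_def by auto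

lemma conn_rel_class_eq_iff:
  assumes "x \<in> V" and "y \<in> V"
  shows "conn_rel V F `` {x} = conn_rel V F `` {y} \<longleftrightarrow> (x, y) \<in> (adj F)\<^sup>*"
proof
  assume "conn_rel V F `` {x} = conn_rel V F `` {y}"
  then show "(x, y) \<in> (adj F)\<^sup>*"
    using assms by (auto simp: conn_rel_def)
next
  assume xy: "(x, y) \<in> (adj F)\<^sup>*"
  then have "(y, x) \<in> (adj F)\<^sup>*"
    using sym_rtrancl_adj by (rule symD[rotated])
  with xy show "conn_rel V F `` {x} = conn_rel V F `` {y}"
    using assms by (auto simp: conn_rel_def intro: rtrancl_trans)
qed

lemma kappa_le_card: "finite V \<Longrightarrow> kappa V F \<le> card V"
  unfolding kappa_def quotient_conn_rel by (rule card_image_le)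

lemma kappa_pos: "finite V \<Longrightarrow> V \<noteq> {} \<Longrightarrow> 0 < kappa V F"
  unfolding kappa_def quotient_conn_rel by (simp add: card_gt_0_iff)

lemma kappa_empty: "kappa V {} = card V"
proof -
  have "inj_on (\<lambda>x. conn_rel V {} `` {x}) V"
    by (rule inj_onI) (simp add: conn_rel_class_eq_iff adj_def)
  then show ?thesis
    unfolding kappa_def quotient_conn_rel by (rule card_image)
qed

lemma card_image_le_card_coarser_image_Suc:
  assumes "finite V" and u: "u \<in> V"
    and refine: "\<And>x y. x \<in> V \<Longrightarrow> y \<in> V \<Longrightarrow> f x = f y \<Longrightarrow> h x = h y"
    and merge: "\<And>x y. x \<in> V \<Longrightarrow> y \<in> V \<Longrightarrow> h x = h y \<Longrightarrow>
                  f x \<noteq> f u \<Longrightarrow> f y \<noteq> f u \<Longrightarrow> f x = f y"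
  shows "card (f ` V) \<le> Suc (card (h ` V))"
proof -
  define g where "g X = h (SOME x. x \<in> V \<and> f x = X)" for X
  have g_f: "g (f x) = h x" if "x \<in> V" for x
  proof -
    have "\<exists>z. z \<in> V \<and> f z = f x"
      using that by blast
    then have "(SOME z. z \<in> V \<and> f z = f x) \<in> V \<and> f (SOME z. z \<in> V \<and> f z = f x) = f x"
      by (rule someI_ex)
    then show ?thesis
      unfolding g_def using refine that by metis
  qed
  have "inj_on g (f ` V - {f u})"
  proof (rule inj_onI)
    fix X Y
    assume "X \<in> f ` V - {f u}" "Y \<in> f ` V - {f u}" and "g X = g Y"
    then obtain x y where "x \<in> V" "y \<in> V" "X = f x" "Y = f y"
      "f x \<noteq> f u" "f y \<noteq> f u" "g (f x) = g (f y)"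
      by blast
    moreover from this have "h x = h y"
      by (simp add: g_f)
    ultimately show "X = Y"
      using merge by simp
  qed
  moreover have "g ` (f ` V - {f u}) \<subseteq> h ` V"
    using g_f by auto
  ultimately have "card (f ` V - {f u}) \<le> card (h ` V)"
    using \<open>finite V\<close> by (simp add: card_inj_on_le)
  moreover have "f u \<in> f ` V"
    using u by blast
  ultimately show ?thesis
    using \<open>finite V\<close> by (simp add: card_Diff_singleton_if)
qed

lemma adj_insert: "adj (insert {u, v} F) = adj F \<union> {(u, v), (v, u)}"
  unfolding adj_def by (auto simp: doubleton_eq_iff)

lemma rtrancl_adj_insertD:
  assumes "(x, y) \<in> (adj (insert {u, v} F))\<^sup>*"
  shows "(x, y) \<in> (adj F)\<^sup>* \<or> (x, u) \<in> (adj F)\<^sup>* \<or> (x, v) \<in> (adj F)\<^sup>*"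
  using assms unfolding adj_insert
proof (induction rule: rtrancl_induct)
  case (step y z)
  then show ?case
    by (cases "(x, y) \<in> (adj F)\<^sup>*") (auto intro: rtrancl_into_rtrancl)
qed simp

lemma kappa_le_kappa_insert_Suc:
  assumes "finite V" and "u \<in> V"
  shows "kappa V F \<le> Suc (kappa V (insert {u, v} F))"
  unfolding kappa_def quotient_conn_rel
proof (rule card_image_le_card_coarser_image_Suc[OF assms])
  have "(adj F)\<^sup>* \<subseteq> (adj (insert {u, v} F))\<^sup>*"
    by (rule rtrancl_mono) (auto simp: adj_insert)
  then show "conn_rel V (insert {u, v} F) `` {x} = conn_rel V (insert {u, v} F) `` {y}"
    if "x \<in> V" "y \<in> V" "conn_rel V F `` {x} = conn_rel V F `` {y}" for x y
    using that by (auto simp: conn_rel_class_eq_iff)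
next
  fix x y
  assume x: "x \<in> V" and y: "y \<in> V"
    and same: "conn_rel V (insert {u, v} F) `` {x} = conn_rel V (insert {u, v} F) `` {y}"
    and "conn_rel V F `` {x} \<noteq> conn_rel V F `` {u}"
    and "conn_rel V F `` {y} \<noteq> conn_rel V F `` {u}"
  then have "(x, u) \<notin> (adj F)\<^sup>*" "(y, u) \<notin> (adj F)\<^sup>*"
    using \<open>u \<in> V\<close> by (simp_all add: conn_rel_class_eq_iff)
  moreover have "(x, y) \<in> (adj (insert {u, v} F))\<^sup>*" "(y, x) \<in> (adj (insert {u, v} F))\<^sup>*"
    using conn_rel_class_eq_iff[OF x y] conn_rel_class_eq_iff[OF y x] same by blast+
  ultimately have "(x, y) \<in> (adj F)\<^sup>* \<or> (x, v) \<in> (adj F)\<^sup>*"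
    and "(y, x) \<in> (adj F)\<^sup>* \<or> (y, v) \<in> (adj F)\<^sup>*"
    by (blast dest: rtrancl_adj_insertD)+
  moreover have "(b, a) \<in> (adj F)\<^sup>*" if "(a, b) \<in> (adj F)\<^sup>*" for a b
    using sym_rtrancl_adj that by (rule symD)
  ultimately have "(x, y) \<in> (adj F)\<^sup>*"
    by (blast intro: rtrancl_trans)
  then show "conn_rel V F `` {x} = conn_rel V F `` {y}"
    using x y by (simp add: conn_rel_class_eq_iff)
qed

lemma card_le_card_edges_plus_kappa:
  assumes "finite V" and "finite F" and "\<forall>e\<in>F. e \<subseteq> V \<and> card e = 2"
  shows "card V \<le> card F + kappa V F"
  using assms(2,3)
proof (induction F rule: finite_induct)
  case empty
  show ?case by (simp add: kappa_empty)
next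
  case (insert e F)
  then obtain u v where "e = {u, v}" and "u \<in> V"
    by (auto simp: card_2_iff)
  then have "kappa V F \<le> Suc (kappa V (insert e F))"
    using kappa_le_kappa_insert_Suc[OF \<open>finite V\<close>] by blast
  moreover have "card V \<le> card F + kappa V F"
    using insert.IH insert.prems by blast
  ultimately show ?case
    using insert.hyps by simp
qed

definition coeff2 :: "'b::zero poly poly \<Rightarrow> nat \<Rightarrow> nat \<Rightarrow> 'b" where
  "coeff2 Q a b = coeff (coeff Q a) b"

definition diag_coeff :: "'b::zero poly poly \<Rightarrow> int \<Rightarrow> nat \<Rightarrow> 'b" where
  "diag_coeff Q t a = (if 0 \<le> int a + t then coeff2 Q a (nat (int a + t)) else 0)"

lemma diag_coeff_diff:
  fixes Q R :: "'b::ab_group_add poly poly"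
  shows "diag_coeff (Q - R) t a = diag_coeff Q t a - diag_coeff R t a"
  by (simp add: diag_coeff_def coeff2_def)

lemma diag_coeff_nonneg: "nonneg_poly2 P \<Longrightarrow> 0 \<le> diag_coeff P t a"
  by (simp add: diag_coeff_def coeff2_def nonneg_poly2_def)

lemma coeff2_one_minus_xy_mult:
  "coeff2 ((1 - mono_xy 1 1) * P) a b =
     coeff2 P a b - (if 0 < a \<and> 0 < b then coeff2 P (a - 1) (b - 1) else 0)"
proof -
  have "coeff2 (monom (monom 1 1) 1 * P) a b =
      (if 0 < a \<and> 0 < b then coeff2 P (a - 1) (b - 1) else 0)"
    by (simp only: coeff2_def coeff_monom_mult) (auto simp: coeff_monom_mult)
  then show ?thesis
    by (simp add: mono_xy_def left_diff_distrib coeff2_def)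
qed

lemma diag_coeff_one_minus_xy_mult:
  "diag_coeff ((1 - mono_xy 1 1) * P) t a =
     diag_coeff P t a - (if 0 < a then diag_coeff P t (a - 1) else 0)"
proof -
  have "nat (int a + t) - 1 = nat (int (a - 1) + t)" if "0 < a" "0 < int a + t"
    using that by (simp add: of_nat_diff nat_diff_distrib')
  then show ?thesis
    unfolding diag_coeff_def coeff2_one_minus_xy_mult by auto
qed

lemma sum_diag_coeff_one_minus_xy_mult:
  "(\<Sum>a<Suc j. diag_coeff ((1 - mono_xy 1 1) * P) t a) = diag_coeff P t j"
proof (induction j)
  case (Suc j)
  then show ?case
    by (simp only: sum.lessThan_Suc diag_coeff_one_minus_xy_mult) simp
qed (simp only: sum.lessThan_Suc diag_coeff_one_minus_xy_mult, simp)

lemma coeff2_whitney: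
  assumes "finite E"
  shows "coeff2 (whitney V E) a b = card {F \<in> Pow E. rk V E - rk V F = a \<and> nullity V F = b}"
proof -
  have "coeff2 (whitney V E) a b = (\<Sum>F\<in>Pow E. of_bool (rk V E - rk V F = a \<and> nullity V F = b))"
    unfolding whitney_def mono_xy_def coeff2_def coeff_sum
    by (rule sum.cong) (auto simp: coeff_monom)
  also have "\<dots> = card (Pow E \<inter> {F. rk V E - rk V F = a \<and> nullity V F = b})"
    using assms by (simp only: sum_of_bool_eq finite_Pow_iff)
  also have "Pow E \<inter> {F. rk V E - rk V F = a \<and> nullity V F = b} =
      {F \<in> Pow E. rk V E - rk V F = a \<and> nullity V F = b}"
    by blast
  finally show ?thesis .
qed

lemma in_C_finite_edges: "in_C n m V E \<Longrightarrow> finite E"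
  unfolding in_C_def simple_graph_def
  by (meson Pow_iff finite_Pow_iff finite_subset subsetI)

lemma in_C_nonempty: "in_C n m V E \<Longrightarrow> V \<noteq> {}"
  by (auto simp: in_C_def connected_graph_def kappa_def)

text \<open>The spanning subgraphs with \<open>Suc a\<close> components and \<open>i\<close> edges are exactly those
  contributing to the coefficient of \<open>x^a y^(a+i+1-n)\<close> of the Whitney polynomial.\<close>
lemma kappa_card_iff_rank_nullity:
  assumes C: "in_C n m V E" and "F \<subseteq> E"
  shows "kappa V F = Suc a \<and> card F = i \<longleftrightarrow>
    0 \<le> int a + (int i + 1 - int n) \<and>
    rk V E - rk V F = a \<and> nullity V F = nat (int a + (int i + 1 - int n))"
proof -
  have "finite V" and edges: "\<forall>e\<in>E. e \<subseteq> V \<and> card e = 2"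
    and "kappa V E = 1" and "card V = n"
    using C by (auto simp: in_C_def simple_graph_def connected_graph_def)
  have "finite F"
    using in_C_finite_edges[OF C] \<open>F \<subseteq> E\<close> by (rule finite_subset[rotated])
  have "0 < kappa V F" "kappa V F \<le> n"
    using kappa_pos[OF \<open>finite V\<close> in_C_nonempty[OF C]] kappa_le_card[OF \<open>finite V\<close>] \<open>card V = n\<close>
    by auto
  moreover have "n \<le> card F + kappa V F"
    using card_le_card_edges_plus_kappa[OF \<open>finite V\<close> \<open>finite F\<close>] edges \<open>F \<subseteq> E\<close> \<open>card V = n\<close>
    by blast
  ultimately show ?thesis
    unfolding rk_def nullity_def \<open>kappa V E = 1\<close> \<open>card V = n\<close> by arith
qed

lemma N_count_eq_sum_diag_coeff_whitney:
  assumes C: "in_C n m V E"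
  shows "real (N_count V E i k) = (\<Sum>a<k. diag_coeff (whitney V E) (int i + 1 - int n) a)"
proof -
  define t where "t = int i + 1 - int n"
  define S where "S a = {F \<in> Pow E. kappa V F = Suc a \<and> card F = i}" for a
  have "finite E"
    using C by (rule in_C_finite_edges)
  have "finite V"
    using C by (simp add: in_C_def simple_graph_def)
  have "{F. F \<subseteq> E \<and> card F = i \<and> kappa V F \<le> k} = (\<Union>a<k. S a)"
  proof (intro equalityI subsetI)
    fix F
    assume F: "F \<in> {F. F \<subseteq> E \<and> card F = i \<and> kappa V F \<le> k}"
    have "kappa V F = Suc (kappa V F - 1)"
      using kappa_pos[OF \<open>finite V\<close> in_C_nonempty[OF C]] by simp
    with F show "F \<in> (\<Union>a<k. S a)"
      by (intro UN_I[of "kappa V F - 1"]) (auto simp: S_def)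
  qed (auto simp: S_def)
  then have "N_count V E i k = card (\<Union>a<k. S a)"
    by (simp add: N_count_def)
  also have "\<dots> = (\<Sum>a<k. card (S a))"
    using \<open>finite E\<close> by (intro card_UN_disjoint) (auto simp: S_def)
  finally have "N_count V E i k = (\<Sum>a<k. card (S a))" .
  moreover have "card (S a) = diag_coeff (whitney V E) t a" for a
  proof -
    have S_eq: "S a = {F \<in> Pow E. 0 \<le> int a + t \<and>
        rk V E - rk V F = a \<and> nullity V F = nat (int a + t)}"
      unfolding S_def t_def
      by (rule Collect_cong) (use kappa_card_iff_rank_nullity[OF C] in blast)
    show ?thesis
    proof (cases "0 \<le> int a + t")
      case True
      then show ?thesis
        using \<open>finite E\<close> by (simp add: S_eq diag_coeff_def coeff2_whitney)
    next
      case False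
      then show ?thesis
        by (simp add: S_eq diag_coeff_def)
    qed
  qed
  ultimately show ?thesis
    by (simp add: t_def)
qed

theorem mainTheorem3:
  fixes VG VH :: "'a set" and EG EH :: "'a set set" and n m :: nat
    and P :: "real poly poly"
  assumes "in_C n m VG EG" and "in_C n m VH EH"
    and "nonneg_poly2 P"
    and "whitney VG EG - whitney VH EH = (1 - mono_xy 1 1) * P"
  shows "\<forall>i\<in>{0..m}. \<forall>k\<in>{1..n}. N_count VH EH i k \<le> N_count VG EG i k"
proof (intro ballI)
  fix i k
  assume "i \<in> {0..m}" and "k \<in> {1..n}"
  then obtain j where k: "k = Suc j"
    using not0_implies_Suc by fastforce
  define t where "t = int i + 1 - int n"
  have "real (N_count VG EG i k) - real (N_count VH EH i k) =
      (\<Sum>a<k. diag_coeff (whitney VG EG - whitney VH EH) t a)"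
    using N_count_eq_sum_diag_coeff_whitney[OF assms(1)] N_count_eq_sum_diag_coeff_whitney[OF assms(2)]
    by (simp add: t_def diag_coeff_diff sum_subtractf)
  also have "\<dots> = diag_coeff P t j"
    unfolding assms(4) k by (rule sum_diag_coeff_one_minus_xy_mult)
  also have "\<dots> \<ge> 0"
    using assms(3) by (rule diag_coeff_nonneg)
  finally show "N_count VH EH i k \<le> N_count VG EG i k"
    by simp
qed

end
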